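(* Let $\Gamma$ be a finite ranked poset. Then $\Gamma$ is Cohen–Macaulay if and only if for every $b\in\Gamma\setminus\{*\}$ and all integers $q,n$ with $rk(b)\ge q>n$ one has $\tilde H^{n-2}(\Delta(\Gamma_{b,q}))=0$.
   Context: A finite ranked poset is a finite poset $\Gamma$ (strict order $<$) with a unique minimal element $*$ such that for every $x\in\Gamma$ all maximal chains in $[*,x]$ have the same length, denoted $rk(x)$. For $b\in\Gamma$ and $1\le q\le rk(b)$, $\Gamma_{b,q}=\{a\in\Gamma: *<a<b,\ rk(b)-rk(a)\le q-1\}$. For a finite poset $P$, $\Delta(P)$ is its order complex (simplicial complex whose simplices are the nonempty chains of $P$). Reduced cohomology is taken with coefficients in a fixed field $\mathbb{F}$, with the convention $\tilde H^{-1}(\Delta(\emptyset))=\mathbb{F}$ and $\tilde H^{n}(\Delta(\emptyset))=0$ for $n\ne-1$. $\Gamma$ is Cohen–Macaulay if for all $a<b$ in $\Gamma$, $\tilde H^n(\Delta((a,b)))\ne0$ implies $n=\dim\Delta((a,b))$, where $(a,b)=\{c: a<c<b\}$. *)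

theory Defs
  imports Main
begin

text \<open>Finite posets are modelled as finite subsets of a type of class order;
  the strict order is the restriction of the type's strict order.\<close>

text \<open>The (k-1)-simplices of the order complex of P: the chains of P with k elements,
  listed in strictly increasing order (each chain exactly once). k = 0 gives the
  empty simplex (augmentation).\<close>
definition simplices :: "'a::order set \<Rightarrow> nat \<Rightarrow> 'a list set" where
  "simplices P k = {xs. length xs = k \<and> sorted_wrt (<) xs \<and> set xs \<subseteq> P}"

definition cochains :: "'a::order set \<Rightarrow> nat \<Rightarrow> ('a list \<Rightarrow> 'f::field) set" where
  "cochains P k = {f. \<forall>xs. xs \<notin> simplices P k \<longrightarrow> f xs = 0}"

definition coboundary :: "'a::order set \<Rightarrow> nat \<Rightarrow> ('a list \<Rightarrow> 'f::field) \<Rightarrow> ('a list \<Rightarrow> 'f)" where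
  "coboundary P k f xs =
     (if xs \<in> simplices P (Suc k)
      then (\<Sum>i<Suc k. (-1) ^ i * f (take i xs @ drop (Suc i) xs))
      else 0)"

definition coboundaries :: "'a::order set \<Rightarrow> nat \<Rightarrow> ('a list \<Rightarrow> 'f::field) set" where
  "coboundaries P k = (case k of 0 \<Rightarrow> {\<lambda>_. 0} | Suc j \<Rightarrow> coboundary P j ` cochains P j)"

text \<open>H^n(Delta(P); F) = 0: every cocycle of degree n is a coboundary.
  Degrees below -1 have zero cochains, hence zero cohomology.\<close>
definition reduced_cohomology_vanishes ::
    "'f::field itself \<Rightarrow> 'a::order set \<Rightarrow> int \<Rightarrow> bool" where
  "reduced_cohomology_vanishes TYPE('f) P n =
     (n < -1 \<or>
      (\<forall>f \<in> (cochains P (nat (n+1)) :: ('a list \<Rightarrow> 'f) set).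
          coboundary P (nat (n+1)) f = (\<lambda>_. 0) \<longrightarrow> f \<in> coboundaries P (nat (n+1))))"

definition order_complex_dim :: "'a::order set \<Rightarrow> int" where
  "order_complex_dim P = Max {int k - 1 | k. simplices P k \<noteq> {}}"

definition open_interval :: "'a::order set \<Rightarrow> 'a \<Rightarrow> 'a \<Rightarrow> 'a set" where
  "open_interval \<Gamma> a b = {c \<in> \<Gamma>. a < c \<and> c < b}"

definition closed_interval :: "'a::order set \<Rightarrow> 'a \<Rightarrow> 'a \<Rightarrow> 'a set" where
  "closed_interval \<Gamma> a b = {c \<in> \<Gamma>. a \<le> c \<and> c \<le> b}"

definition is_chain :: "'a::order set \<Rightarrow> 'a set \<Rightarrow> bool" where
  "is_chain I C \<longleftrightarrow> C \<subseteq> I \<and> (\<forall>x\<in>C. \<forall>y\<in>C. x \<le> y \<or> y \<le> x)"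

definition is_maximal_chain :: "'a::order set \<Rightarrow> 'a set \<Rightarrow> bool" where
  "is_maximal_chain I C \<longleftrightarrow> is_chain I C \<and> (\<forall>D. is_chain I D \<and> C \<subseteq> D \<longrightarrow> D = C)"

definition unique_minimal :: "'a::order set \<Rightarrow> 'a \<Rightarrow> bool" where
  "unique_minimal \<Gamma> s \<longleftrightarrow> s \<in> \<Gamma> \<and> (\<forall>x\<in>\<Gamma>. (\<not>(\<exists>y\<in>\<Gamma>. y < x)) \<longleftrightarrow> x = s)"

definition finite_ranked_poset :: "'a::order set \<Rightarrow> 'a \<Rightarrow> bool" where
  "finite_ranked_poset \<Gamma> s \<longleftrightarrow> finite \<Gamma> \<and> unique_minimal \<Gamma> s \<and>
     (\<forall>x\<in>\<Gamma>. \<forall>C D. is_maximal_chain (closed_interval \<Gamma> s x) C \<and>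
                     is_maximal_chain (closed_interval \<Gamma> s x) D \<longrightarrow> card C = card D)"

definition rk :: "'a::order set \<Rightarrow> 'a \<Rightarrow> 'a \<Rightarrow> nat" where
  "rk \<Gamma> s x = card (SOME C. is_maximal_chain (closed_interval \<Gamma> s x) C) - 1"

definition Gamma_bq :: "'a::order set \<Rightarrow> 'a \<Rightarrow> 'a \<Rightarrow> int \<Rightarrow> 'a set" where
  "Gamma_bq \<Gamma> s b q = {a \<in> \<Gamma>. s < a \<and> a < b \<and> int (rk \<Gamma> s b) - int (rk \<Gamma> s a) \<le> q - 1}"

definition cohen_macaulay :: "'f::field itself \<Rightarrow> 'a::order set \<Rightarrow> bool" where
  "cohen_macaulay TYPE('f) \<Gamma> \<longleftrightarrow>
     (\<forall>a\<in>\<Gamma>. \<forall>b\<in>\<Gamma>. a < b \<longrightarrow> (\<forall>n::int.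
        \<not> reduced_cohomology_vanishes TYPE('f) (open_interval \<Gamma> a b) n \<longrightarrow>
        n = order_complex_dim (open_interval \<Gamma> a b)))"

end

theory Submission
  imports Defs
begin

text \<open>Write \<open>\<Gamma>\<^bsub>b,q\<^esub>\<close> as the part of the interval \<open>(*, b)\<close> of rank at least
  \<open>r = rk b - q + 1\<close>. Raising \<open>r\<close> by one removes the layer \<open>X\<close> of rank \<open>r\<close>, a set of
  minimal elements whose upper links are the open intervals \<open>(x, b)\<close>. Removing a set \<open>X\<close> of
  minimal elements from a poset \<open>P\<close> detaches from \<open>\<Delta>(P)\<close> one cone over the upper link of each
  \<open>x \<in> X\<close>, and the resulting Mayer--Vietoris sequence yields two implications: vanishing for
  \<open>P\<close> and for all links in degree \<open>n\<close> gives vanishing for \<open>P - X\<close> in degree \<open>n\<close>; vanishing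
  for \<open>P - X\<close> in degree \<open>n\<close> and for \<open>P\<close> in degree \<open>n + 1\<close> gives vanishing for each link in
  degree \<open>n\<close>. An open interval \<open>(a, b)\<close> has dimension \<open>rk b - rk a - 2\<close>, so Cohen--Macaulayness
  means vanishing below that dimension. Induction on \<open>r\<close> with the first implication turns it
  into the vanishing for all \<open>\<Gamma>\<^bsub>b,q\<^esub>\<close>; conversely, the second implication applied to the
  layer of rank \<open>rk a\<close> recovers the vanishing for \<open>(a, b)\<close>.\<close>

section \<open>Cochains of order complexes\<close>

text \<open>Cochains of index \<open>k\<close> live on chains with \<open>k\<close> elements, i.e.\ in degree \<open>k - 1\<close>.\<close>

definition exact_at :: "'f::field itself \<Rightarrow> 'a::order set \<Rightarrow> nat \<Rightarrow> bool" where
  "exact_at TYPE('f) P k \<longleftrightarrow>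
     (\<forall>f \<in> (cochains P k :: ('a list \<Rightarrow> 'f) set).
        coboundary P k f = (\<lambda>_. 0) \<longrightarrow> f \<in> coboundaries P k)"

lemma reduced_cohomology_vanishes_iff_exact_at:
  "reduced_cohomology_vanishes TYPE('f::field) P n \<longleftrightarrow> n < -1 \<or> exact_at TYPE('f) P (nat (n + 1))"
  by (simp add: reduced_cohomology_vanishes_def exact_at_def)

lemma sorted_wrt_delete_nth:
  assumes "sorted_wrt (<) xs"
  shows "sorted_wrt (<) (take i xs @ drop (Suc i) xs)"
proof -
  have "\<forall>x\<in>set (take i xs). \<forall>y\<in>set (drop i xs). x < y"
    using assms sorted_wrt_append[of "(<)" "take i xs" "drop i xs"] by simp
  then show ?thesis
    using assms set_drop_subset_set_drop[of i "Suc i" xs] by (auto simp: sorted_wrt_append)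
qed

lemma face_in_simplices:
  assumes "xs \<in> simplices P (Suc k)" "i < Suc k"
  shows "take i xs @ drop (Suc i) xs \<in> simplices P k"
proof -
  have "set (take i xs @ drop (Suc i) xs) \<subseteq> set xs"
    using set_take_subset set_drop_subset by fastforce
  then show ?thesis
    using assms sorted_wrt_delete_nth[of xs i] by (auto simp: simplices_def)
qed

lemma simplices_mono: "R \<subseteq> P \<Longrightarrow> simplices R k \<subseteq> simplices P k"
  by (auto simp: simplices_def)

definition strict_upset :: "'a::order set \<Rightarrow> 'a \<Rightarrow> 'a set" where
  "strict_upset P x = {y \<in> P. x < y}"

lemma Cons_in_simplices_iff:
  "x # zs \<in> simplices P (Suc k) \<longleftrightarrow> x \<in> P \<and> zs \<in> simplices (strict_upset P x) k"
  by (auto simp: simplices_def strict_upset_def)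

lemma simplex_Suc_cases:
  assumes "ws \<in> simplices P (Suc k)"
  obtains x zs where "ws = x # zs" "x \<in> P" "zs \<in> simplices (strict_upset P x) k"
  using assms by (cases ws) (auto simp: Cons_in_simplices_iff, simp add: simplices_def)

lemma simplex_starts_with_minimal:
  assumes "ws \<in> simplices P k" "x \<in> set ws" "\<forall>y\<in>P. \<not> y < x"
  shows "hd ws = x"
proof (cases ws)
  case (Cons h t)
  have "h \<in> P" "h = x \<or> (x \<in> set t \<and> h < x)"
    using assms(1,2) by (auto simp: Cons simplices_def)
  then show ?thesis using assms(3) Cons by auto
qed (use assms in auto)

lemma coboundary_cong:
  assumes "R \<subseteq> P" "ys \<in> simplices R (Suc k)" "\<forall>zs\<in>simplices R k. f zs = g zs"
  shows "coboundary P k f ys = coboundary R k g ys"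
  using assms simplices_mono[OF assms(1)] face_in_simplices[OF assms(2)]
  by (auto simp: coboundary_def intro!: sum.cong)

lemma coboundary_Cons:
  assumes "x # zs \<in> simplices P (Suc (Suc k))"
  shows "coboundary P (Suc k) F (x # zs) =
     F zs - (\<Sum>i<Suc k. (-1) ^ i * F (x # (take i zs @ drop (Suc i) zs)))"
  using assms unfolding coboundary_def
  by (simp only: if_True sum.lessThan_Suc_shift) (simp add: sum_negf)

lemma coboundary_zero: "coboundary P k (\<lambda>_. 0) = (\<lambda>_. 0)"
  by (simp add: coboundary_def fun_eq_iff)

lemma coboundary_diff: "coboundary P k (f - g) = coboundary P k f - coboundary P k g"
  by (simp add: coboundary_def fun_eq_iff sum_subtractf right_diff_distrib)

lemma cochains_diff: "f \<in> cochains P k \<Longrightarrow> g \<in> cochains P k \<Longrightarrow> f - g \<in> cochains P k"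
  by (simp add: cochains_def)

lemma zero_in_coboundaries: "(\<lambda>_. 0 :: 'f::field) \<in> coboundaries P k"
proof (cases k)
  case (Suc j)
  have "(\<lambda>_. 0 :: 'f) \<in> cochains P j" by (simp add: cochains_def)
  then have "coboundary P j (\<lambda>_. 0 :: 'f) \<in> coboundaries P k"
    unfolding Suc coboundaries_def by simp
  then show ?thesis by (simp add: coboundary_zero)
qed (simp add: coboundaries_def)

lemma coboundaries_0: "coboundaries P 0 = {\<lambda>_. 0}"
  by (simp add: coboundaries_def)

lemma exact_at_0_iff: "exact_at TYPE('f::field) P 0 \<longleftrightarrow> P \<noteq> {}"
proof
  assume exact: "exact_at TYPE('f) P 0"
  define f :: "'a list \<Rightarrow> 'f" where "f xs = (if xs = [] then 1 else 0)" for xs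
  have "f \<in> cochains P 0" by (simp add: f_def cochains_def simplices_def)
  moreover have "f \<notin> coboundaries P 0" by (simp add: coboundaries_0 f_def fun_eq_iff)
  ultimately have "coboundary P 0 f \<noteq> (\<lambda>_. 0)" using exact by (auto simp: exact_at_def)
  then show "P \<noteq> {}" by (auto simp: coboundary_def simplices_def fun_eq_iff split: if_splits)
next
  assume "P \<noteq> {}"
  then obtain y where y: "y \<in> P" by blast
  show "exact_at TYPE('f) P 0"
    unfolding exact_at_def
  proof (intro ballI impI)
    fix f :: "'a list \<Rightarrow> 'f"
    assume f: "f \<in> cochains P 0" "coboundary P 0 f = (\<lambda>_. 0)"
    have "f [] = 0"
      using fun_cong[OF f(2), of "[y]"] y by (simp add: coboundary_def simplices_def)
    moreover have "f xs = 0" if "xs \<noteq> []" for xs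
      using f(1) that by (simp add: cochains_def simplices_def)
    ultimately have "f = (\<lambda>_. 0)" by (simp add: fun_eq_iff) (metis list.exhaust)
    then show "f \<in> coboundaries P 0" by (simp add: coboundaries_0)
  qed
qed

lemma exact_at_if_no_simplices:
  assumes "simplices P k = {}" "0 < k"
  shows "exact_at TYPE('f::field) P k"
  unfolding exact_at_def
proof (intro ballI impI)
  fix f :: "'a list \<Rightarrow> 'f"
  assume "f \<in> cochains P k"
  then have "f = (\<lambda>_. 0)" using assms(1) by (auto simp: cochains_def)
  then show "f \<in> coboundaries P k" by (simp add: zero_in_coboundaries)
qed

definition restrict_cochain :: "'a::order set \<Rightarrow> nat \<Rightarrow> ('a list \<Rightarrow> 'f::zero) \<Rightarrow> 'a list \<Rightarrow> 'f" where
  "restrict_cochain R k f xs = (if xs \<in> simplices R k then f xs else 0)"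

lemma restrict_cochain_in_cochains: "restrict_cochain R k f \<in> cochains R k"
  by (simp add: restrict_cochain_def cochains_def)

lemma restrict_cochain_id: "f \<in> cochains R k \<Longrightarrow> restrict_cochain R k f = f"
  by (auto simp: restrict_cochain_def cochains_def)

lemma coboundary_restrict_cochain:
  assumes "R \<subseteq> P"
  shows "coboundary R k (restrict_cochain R k f) = restrict_cochain R (Suc k) (coboundary P k f)"
proof
  fix ys
  show "coboundary R k (restrict_cochain R k f) ys = restrict_cochain R (Suc k) (coboundary P k f) ys"
    using coboundary_cong[OF assms, of ys k f "restrict_cochain R k f"]
    by (auto simp: restrict_cochain_def coboundary_def)
qed

section \<open>Removing a set of minimal elements\<close>

text \<open>If \<open>X\<close> consists of minimal elements of \<open>P\<close>, a chain of \<open>P\<close> either avoids \<open>X\<close> or is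
  \<open>x # zs\<close> with \<open>x \<in> X\<close> and \<open>zs\<close> a chain of the upper link \<open>strict_upset P x\<close>; accordingly a
  cochain on \<open>P\<close> is glued from one on \<open>P - X\<close> and one on each link.\<close>

definition glue_cochain ::
    "'a set \<Rightarrow> ('a list \<Rightarrow> 'f) \<Rightarrow> ('a \<Rightarrow> 'a list \<Rightarrow> 'f) \<Rightarrow> 'a list \<Rightarrow> 'f" where
  "glue_cochain X f g ws = (case ws of x # zs \<Rightarrow> if x \<in> X then g x zs else f ws | [] \<Rightarrow> f ws)"

definition cone_cochain :: "'a \<Rightarrow> ('a list \<Rightarrow> 'f::zero) \<Rightarrow> 'a list \<Rightarrow> 'f" where
  "cone_cochain x g ws = (case ws of y # zs \<Rightarrow> if y = x then g zs else 0 | [] \<Rightarrow> 0)"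

locale minimal_subset =
  fixes P X :: "'a::order set"
  assumes subset: "X \<subseteq> P"
    and minimal: "\<And>x y. x \<in> X \<Longrightarrow> y \<in> P \<Longrightarrow> \<not> y < x"
begin

lemma strict_upset_subset: "x \<in> X \<Longrightarrow> strict_upset P x \<subseteq> P - X"
  using minimal subset by (auto simp: strict_upset_def)

lemma simplex_cases:
  assumes "ws \<in> simplices P (Suc k)"
  obtains (outside) "ws \<in> simplices (P - X) (Suc k)"
    | (cone) x zs where "ws = x # zs" "x \<in> X" "zs \<in> simplices (strict_upset P x) k"
proof (cases "set ws \<inter> X = {}")
  case True
  then show ?thesis using assms outside by (auto simp: simplices_def)
next
  case False
  then obtain x where x: "x \<in> set ws" "x \<in> X" by blast
  obtain y zs where "ws = y # zs" "zs \<in> simplices (strict_upset P y) k"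
    using simplex_Suc_cases[OF assms] by metis
  moreover have "hd ws = x"
    using simplex_starts_with_minimal[OF assms x(1)] minimal[OF x(2)] by blast
  ultimately show ?thesis using cone x(2) by simp
qed

lemma glue_cochain_outside:
  assumes "zs \<in> simplices (P - X) (Suc k)"
  shows "glue_cochain X f g zs = f zs"
  using assms by (cases zs) (auto simp: glue_cochain_def simplices_def)

lemma glue_cochain_in_cochains:
  assumes "f \<in> cochains (P - X) (Suc k)" "\<And>x. x \<in> X \<Longrightarrow> g x \<in> cochains (strict_upset P x) k"
  shows "glue_cochain X f g \<in> cochains P (Suc k)"
  unfolding cochains_def
proof (intro CollectI allI impI)
  fix ws assume ws: "ws \<notin> simplices P (Suc k)"
  then have "ws \<notin> simplices (P - X) (Suc k)" using simplices_mono[of "P - X" P] by blast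
  then show "glue_cochain X f g ws = 0"
    using assms ws subset
    by (auto simp: glue_cochain_def cochains_def Cons_in_simplices_iff split: list.split)
qed

lemma restrict_glue_cochain:
  "restrict_cochain (P - X) m (glue_cochain X f g) = restrict_cochain (P - X) m f"
  by (auto simp: fun_eq_iff restrict_cochain_def glue_cochain_def simplices_def split: list.split)

lemma glue_restrict_cochain:
  assumes "F \<in> cochains P (Suc k)"
  shows "glue_cochain X (restrict_cochain (P - X) (Suc k) F)
           (\<lambda>x. restrict_cochain (strict_upset P x) k (\<lambda>zs. F (x # zs))) = F"
proof
  fix ws
  show "glue_cochain X (restrict_cochain (P - X) (Suc k) F)
           (\<lambda>x. restrict_cochain (strict_upset P x) k (\<lambda>zs. F (x # zs))) ws = F ws"
  proof (cases "ws \<in> simplices P (Suc k)")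
    case True
    then show ?thesis
      by (cases rule: simplex_cases)
        (auto simp: glue_cochain_def restrict_cochain_def simplices_def split: list.split)
  next
    case False
    then show ?thesis using assms subset
      by (auto simp: glue_cochain_def restrict_cochain_def cochains_def Cons_in_simplices_iff
          simplices_def split: list.split)
  qed
qed

lemma coboundary_glue_cochain:
  assumes f: "f \<in> cochains (P - X) (Suc k)"
    and g: "\<And>x. x \<in> X \<Longrightarrow> g x \<in> cochains (strict_upset P x) k"
  shows "coboundary P (Suc k) (glue_cochain X f g) =
    glue_cochain X (coboundary (P - X) (Suc k) f)
      (\<lambda>x. restrict_cochain (strict_upset P x) (Suc k) f - coboundary (strict_upset P x) k (g x))"
    (is "?lhs = glue_cochain X ?f' ?g'")
proof
  fix ws
  show "?lhs ws = glue_cochain X ?f' ?g' ws"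
  proof (cases "ws \<in> simplices P (Suc (Suc k))")
    case False
    then have "ws \<notin> simplices (P - X) (Suc (Suc k))" using simplices_mono[of "P - X" P] by blast
    then show ?thesis using False subset
      by (auto simp: coboundary_def glue_cochain_def restrict_cochain_def Cons_in_simplices_iff
          split: list.split)
  next
    case True
    then show ?thesis
    proof (cases rule: simplex_cases)
      case outside
      have "?lhs ws = coboundary (P - X) (Suc k) f ws"
        by (rule coboundary_cong[OF _ outside]) (auto intro: glue_cochain_outside)
      then show ?thesis using glue_cochain_outside[OF outside, of ?f' ?g'] by simp
    next
      case (cone x zs)
      have zs: "zs \<in> simplices (P - X) (Suc k)"
        using cone(3) simplices_mono[OF strict_upset_subset[OF cone(2)]] by blast
      have "?lhs ws = f zs - (\<Sum>i<Suc k. (-1) ^ i * g x (take i zs @ drop (Suc i) zs))"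
        using coboundary_Cons[of x zs P k "glue_cochain X f g"] True cone(1,2)
          glue_cochain_outside[OF zs, of f g]
        by (simp add: glue_cochain_def del: sum.lessThan_Suc)
      also have "\<dots> = ?g' x zs"
        using cone(3) by (simp add: restrict_cochain_def coboundary_def del: sum.lessThan_Suc)
      finally show ?thesis using cone(1,2) by (simp add: glue_cochain_def)
    qed
  qed
qed

lemma exact_at_diff:
  assumes exact_P: "exact_at TYPE('f::field) P k"
    and exact_upset: "\<And>x. x \<in> X \<Longrightarrow> exact_at TYPE('f) (strict_upset P x) k"
  shows "exact_at TYPE('f) (P - X) k"
proof (cases k)
  case 0
  have "P - X \<noteq> {}"
  proof (cases "X = {}")
    case False
    then obtain x where x: "x \<in> X" by blast
    then have "strict_upset P x \<noteq> {}" using exact_upset 0 by (simp add: exact_at_0_iff)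
    then show ?thesis using strict_upset_subset[OF x] by blast
  qed (use exact_P 0 in \<open>simp add: exact_at_0_iff\<close>)
  then show ?thesis using 0 by (simp add: exact_at_0_iff)
next
  case (Suc j)
  show ?thesis
    unfolding exact_at_def
  proof (intro ballI impI)
    fix f :: "'a list \<Rightarrow> 'f"
    assume f: "f \<in> cochains (P - X) k" "coboundary (P - X) k f = (\<lambda>_. 0)"
    have "\<exists>g \<in> cochains (strict_upset P x) j.
            coboundary (strict_upset P x) j g = restrict_cochain (strict_upset P x) k f"
      if x: "x \<in> X" for x
    proof -
      have "coboundary (strict_upset P x) k (restrict_cochain (strict_upset P x) k f) = (\<lambda>_. 0)"
        using coboundary_restrict_cochain[OF strict_upset_subset[OF x], of k f] f(2)
        by (simp add: restrict_cochain_def fun_eq_iff)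
      then show ?thesis
        using exact_upset[OF x] restrict_cochain_in_cochains
        by (force simp: exact_at_def coboundaries_def Suc)
    qed
    then obtain g where g: "\<And>x. x \<in> X \<Longrightarrow> g x \<in> cochains (strict_upset P x) j"
      "\<And>x. x \<in> X \<Longrightarrow> coboundary (strict_upset P x) j (g x) = restrict_cochain (strict_upset P x) k f"
      by metis
    define F where "F = glue_cochain X f g"
    have F: "F \<in> cochains P k"
      using glue_cochain_in_cochains[of f j g] f(1) g(1) by (simp add: F_def Suc)
    have "coboundary P k F = glue_cochain X (\<lambda>_. 0) (\<lambda>_ _. 0)"
      unfolding F_def Suc using coboundary_glue_cochain[of f j g] f g Suc
      by (simp add: glue_cochain_def fun_eq_iff split: list.split)
    also have "\<dots> = (\<lambda>_. 0)" by (simp add: glue_cochain_def fun_eq_iff split: list.split)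
    finally obtain h where h: "h \<in> cochains P j" "F = coboundary P j h"
      using exact_P F by (auto simp: exact_at_def coboundaries_def Suc)
    have "f = restrict_cochain (P - X) k F"
      using f(1) by (simp add: F_def restrict_glue_cochain restrict_cochain_id)
    also have "\<dots> = coboundary (P - X) j (restrict_cochain (P - X) j h)"
      using coboundary_restrict_cochain[of "P - X" P j h] h(2) Suc by simp
    finally show "f \<in> coboundaries (P - X) k"
      using restrict_cochain_in_cochains by (auto simp: coboundaries_def Suc)
  qed
qed

lemma cone_cochain_eq_glue_cochain:
  "x \<in> X \<Longrightarrow> cone_cochain x g = glue_cochain X (\<lambda>_. 0) (\<lambda>y. if y = x then g else (\<lambda>_. 0))"
  by (simp add: cone_cochain_def glue_cochain_def fun_eq_iff split: list.split)

lemma cone_cochain_cocycle: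
  assumes x: "x \<in> X"
    and g: "g \<in> cochains (strict_upset P x) k" "coboundary (strict_upset P x) k g = (\<lambda>_. 0)"
  shows "cone_cochain x g \<in> cochains P (Suc k)"
    and "coboundary P (Suc k) (cone_cochain x g) = (\<lambda>_. 0)"
proof -
  define g' where "g' y = (if y = x then g else (\<lambda>_. 0))" for y
  have zero: "(\<lambda>_. 0) \<in> cochains (P - X) (Suc k)" by (simp add: cochains_def)
  have g': "g' y \<in> cochains (strict_upset P y) k" for y
    using g(1) by (simp add: g'_def cochains_def)
  have cone: "cone_cochain x g = glue_cochain X (\<lambda>_. 0) g'"
    using cone_cochain_eq_glue_cochain[OF x] by (simp add: g'_def [abs_def])
  show "cone_cochain x g \<in> cochains P (Suc k)"
    unfolding cone using zero g' by (rule glue_cochain_in_cochains)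
  show "coboundary P (Suc k) (cone_cochain x g) = (\<lambda>_. 0)"
    unfolding cone coboundary_glue_cochain[OF zero g'] using g(2)
    by (simp add: coboundary_zero restrict_cochain_def g'_def glue_cochain_def fun_eq_iff
        split: list.split)
qed

lemma in_coboundaries_if_cone_primitive:
  assumes x: "x \<in> X" and g: "g \<in> cochains (strict_upset P x) k"
    and H: "H \<in> cochains P k" "coboundary P k H = cone_cochain x g"
    and h: "restrict_cochain (P - X) k H \<in> coboundaries (P - X) k"
  shows "g \<in> coboundaries (strict_upset P x) k"
proof (cases k)
  case 0
  have "g [] = coboundary P 0 H [x]" by (simp add: H(2)[unfolded 0] cone_cochain_def)
  also have "\<dots> = restrict_cochain (P - X) k H []"
    using x subset 0 by (auto simp: coboundary_def restrict_cochain_def simplices_def)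
  also have "\<dots> = 0" using h 0 by (simp add: coboundaries_0)
  finally have "g = (\<lambda>_. 0)"
    using g 0 by (simp add: fun_eq_iff cochains_def simplices_def) (metis list.exhaust)
  then show ?thesis by (simp add: zero_in_coboundaries)
next
  case (Suc j)
  let ?L = "strict_upset P"
  define h where "h = restrict_cochain (P - X) k H"
  define e where "e = (\<lambda>y. restrict_cochain (?L y) j (\<lambda>zs. H (y # zs)))"
  obtain \<phi> where \<phi>: "h = coboundary (P - X) j \<phi>"
    using h by (auto simp: coboundaries_def Suc h_def)
  have h_cochain: "h \<in> cochains (P - X) (Suc j)"
    using restrict_cochain_in_cochains Suc by (simp add: h_def)
  have e_cochain: "e y \<in> cochains (?L y) j" for y
    by (simp add: e_def restrict_cochain_in_cochains)
  have "cone_cochain x g = coboundary P (Suc j) (glue_cochain X h e)"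
    using H glue_restrict_cochain[of H j] Suc by (simp add: h_def e_def)
  also have "\<dots> = glue_cochain X (coboundary (P - X) (Suc j) h)
                (\<lambda>y. restrict_cochain (?L y) (Suc j) h - coboundary (?L y) j (e y))"
    by (rule coboundary_glue_cochain[OF h_cochain e_cochain])
  finally have cone: "cone_cochain x g = \<dots>" .
  have "g zs = (restrict_cochain (?L x) k h - coboundary (?L x) j (e x)) zs" for zs
    using fun_cong[OF cone, of "x # zs"] x Suc by (simp add: cone_cochain_def glue_cochain_def)
  then have "g = restrict_cochain (?L x) k h - coboundary (?L x) j (e x)" by (rule ext)
  also have "restrict_cochain (?L x) k h = coboundary (?L x) j (restrict_cochain (?L x) j \<phi>)"
    using coboundary_restrict_cochain[OF strict_upset_subset[OF x], of j \<phi>] \<phi> Suc by simp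
  finally have "g = coboundary (?L x) j (restrict_cochain (?L x) j \<phi> - e x)"
    by (simp only: coboundary_diff)
  moreover have "restrict_cochain (?L x) j \<phi> - e x \<in> cochains (?L x) j"
    by (simp add: cochains_diff restrict_cochain_in_cochains e_def)
  ultimately show ?thesis by (auto simp: coboundaries_def Suc)
qed

lemma exact_at_strict_upset:
  assumes exact_diff: "exact_at TYPE('f::field) (P - X) k"
    and exact_P: "exact_at TYPE('f) P (Suc k)"
    and x: "x \<in> X"
  shows "exact_at TYPE('f) (strict_upset P x) k"
  unfolding exact_at_def
proof (intro ballI impI)
  fix g :: "'a list \<Rightarrow> 'f"
  assume g: "g \<in> cochains (strict_upset P x) k" "coboundary (strict_upset P x) k g = (\<lambda>_. 0)"
  obtain H where H: "H \<in> cochains P k" "coboundary P k H = cone_cochain x g"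
    using exact_P cone_cochain_cocycle[OF x g] by (force simp: exact_at_def coboundaries_def)
  have "coboundary (P - X) k (restrict_cochain (P - X) k H) =
      restrict_cochain (P - X) (Suc k) (cone_cochain x g)"
    using coboundary_restrict_cochain[of "P - X" P k H] H(2) by simp
  also have "\<dots> = (\<lambda>_. 0)"
    by (simp add: cone_cochain_eq_glue_cochain[OF x] restrict_glue_cochain restrict_cochain_def
        fun_eq_iff)
  finally have "restrict_cochain (P - X) k H \<in> coboundaries (P - X) k"
    using exact_diff by (simp add: exact_at_def restrict_cochain_in_cochains)
  then show "g \<in> coboundaries (strict_upset P x) k"
    using in_coboundaries_if_cone_primitive[OF x g(1) H] by simp
qed

end

section \<open>Finite ranked posets\<close>

lemma sorted_wrt_less_distinct: "sorted_wrt (<) (xs :: 'a::order list) \<Longrightarrow> distinct xs"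
  by (induction xs) auto

lemma sorted_list_of_chain:
  fixes E :: "'a::order set"
  assumes "finite E" "\<forall>x\<in>E. \<forall>y\<in>E. x \<le> y \<or> y \<le> x"
  obtains xs where "set xs = E" "sorted_wrt (<) xs" "length xs = card E"
proof -
  have "\<exists>xs. set xs = E \<and> sorted_wrt (<) xs"
    using assms
  proof (induction E rule: finite_induct)
    case (insert x F)
    then obtain xs where xs: "set xs = F" "sorted_wrt (<) xs" by blast
    have cmp: "y < x \<or> x < y" if "y \<in> F" for y
      using insert.prems insert.hyps(2) that by (metis insertCI order_less_le)
    let ?ys = "filter (\<lambda>y. y < x) xs @ x # filter (\<lambda>y. x < y) xs"
    have "set ?ys = insert x F" using xs(1) cmp by auto
    moreover have "sorted_wrt (<) ?ys"
      unfolding sorted_wrt_append using xs(2)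
      by (auto simp: sorted_wrt_filter dest: order_less_trans)
    ultimately show ?case by blast
  qed simp
  then obtain xs where xs: "set xs = E" "sorted_wrt (<) xs" by blast
  moreover have "length xs = card E"
    using distinct_card[OF sorted_wrt_less_distinct[OF xs(2)]] xs(1) by simp
  ultimately show ?thesis by (rule that)
qed

lemma maximal_chain_insert: "is_maximal_chain I C \<Longrightarrow> is_chain I (insert z C) \<Longrightarrow> z \<in> C"
  unfolding is_maximal_chain_def by blast

lemma maximal_chain_mem:
  assumes "is_maximal_chain I C" "z \<in> I" "\<forall>y\<in>I. y \<le> z \<or> z \<le> y"
  shows "z \<in> C"
proof (rule maximal_chain_insert[OF assms(1)])
  show "is_chain I (insert z C)"
    using assms unfolding is_maximal_chain_def is_chain_def by blast
qed

lemma maximal_chain_exists: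
  assumes "finite I"
  obtains C where "is_maximal_chain I C"
proof -
  have "finite {C. is_chain I C}"
    using assms by (rule finite_subset[rotated, OF finite_Pow_iff[THEN iffD2]]) (auto simp: is_chain_def)
  moreover have "{} \<in> {C. is_chain I C}" by (simp add: is_chain_def)
  ultimately obtain m where "m \<in> {C. is_chain I C}" "\<forall>b\<in>{C. is_chain I C}. m \<le> b \<longrightarrow> m = b"
    using finite_has_maximal[of "{C. is_chain I C}"] by blast
  then show ?thesis using that unfolding is_maximal_chain_def by blast
qed

lemma finite_maximal_chain: "finite I \<Longrightarrow> is_maximal_chain I C \<Longrightarrow> finite C"
  unfolding is_maximal_chain_def is_chain_def by (blast intro: finite_subset)

lemma order_complex_dim_eq:
  assumes "simplices P N \<noteq> {}" "\<And>k. simplices P k \<noteq> {} \<Longrightarrow> k \<le> N"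
  shows "order_complex_dim P = int N - 1"
proof -
  let ?K = "{k. simplices P k \<noteq> {}}"
  have bound: "\<forall>k\<in>?K. k \<le> N" using assms(2) by blast
  then have fin: "finite ?K" using finite_nat_set_iff_bounded_le by blast
  have "Max ((\<lambda>k. int k - 1) ` ?K) = int N - 1"
  proof (rule Max_eqI)
    show "finite ((\<lambda>k. int k - 1) ` ?K)" using fin by simp
    show "y \<le> int N - 1" if "y \<in> (\<lambda>k. int k - 1) ` ?K" for y
      using that bound by auto
    show "int N - 1 \<in> (\<lambda>k. int k - 1) ` ?K" using assms(1) by blast
  qed
  moreover have "{int k - 1 |k. simplices P k \<noteq> {}} = (\<lambda>k. int k - 1) ` ?K"
    by auto
  ultimately show ?thesis by (simp add: order_complex_dim_def)
qed

locale ranked_poset =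
  fixes \<Gamma> :: "'a::order set" and s :: 'a
  assumes ranked: "finite_ranked_poset \<Gamma> s"
begin

lemma finite_Gamma: "finite \<Gamma>"
  using ranked by (simp add: finite_ranked_poset_def)

lemma finite_closed_interval: "finite (closed_interval \<Gamma> a b)"
  using finite_Gamma by (simp add: closed_interval_def)

lemma bottom_mem: "s \<in> \<Gamma>"
  using ranked by (simp add: finite_ranked_poset_def unique_minimal_def)

lemma bottom_le:
  assumes "x \<in> \<Gamma>"
  shows "s \<le> x"
proof -
  have "finite {y\<in>\<Gamma>. y \<le> x}" "x \<in> {y\<in>\<Gamma>. y \<le> x}" using finite_Gamma assms by auto
  then obtain m where m: "m \<in> {y\<in>\<Gamma>. y \<le> x}" "\<forall>y\<in>{y\<in>\<Gamma>. y \<le> x}. y \<le> m \<longrightarrow> m = y"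
    using finite_has_minimal by blast
  then have "\<not> (\<exists>y\<in>\<Gamma>. y < m)"
    by (metis (mono_tags, lifting) mem_Collect_eq order.strict_iff_not order_trans)
  then have "m = s" using m(1) ranked by (simp add: finite_ranked_poset_def unique_minimal_def)
  then show ?thesis using m(1) by simp
qed

lemma card_maximal_chain:
  assumes "x \<in> \<Gamma>" "is_maximal_chain (closed_interval \<Gamma> s x) C"
  shows "card C = Suc (rk \<Gamma> s x)"
proof -
  define C0 where "C0 = (SOME C. is_maximal_chain (closed_interval \<Gamma> s x) C)"
  have C0: "is_maximal_chain (closed_interval \<Gamma> s x) C0"
    unfolding C0_def using maximal_chain_exists[OF finite_closed_interval] by (rule someI_ex) blast
  have "card C = card C0" using ranked assms C0 unfolding finite_ranked_poset_def by blast
  moreover have "x \<in> C0"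
    by (rule maximal_chain_mem[OF C0]) (use assms(1) bottom_le in \<open>auto simp: closed_interval_def\<close>)
  then have "card C0 \<noteq> 0"
    using finite_maximal_chain[OF finite_closed_interval C0] by auto
  ultimately show ?thesis unfolding rk_def C0_def by simp
qed

lemma maximal_chain_Un:
  assumes a: "a \<in> \<Gamma>" and ab: "a \<le> b"
    and C: "is_maximal_chain (closed_interval \<Gamma> s a) C"
    and D: "is_maximal_chain (closed_interval \<Gamma> a b) D"
  shows "is_maximal_chain (closed_interval \<Gamma> s b) (C \<union> D)" "C \<inter> D = {a}"
proof -
  have aC: "a \<in> C"
    by (rule maximal_chain_mem[OF C]) (use a bottom_le in \<open>auto simp: closed_interval_def\<close>)
  have aD: "a \<in> D"
    by (rule maximal_chain_mem[OF D]) (use a ab in \<open>auto simp: closed_interval_def\<close>)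
  have Cs: "C \<subseteq> closed_interval \<Gamma> s a" and Cc: "\<forall>x\<in>C. \<forall>y\<in>C. x \<le> y \<or> y \<le> x"
    using C unfolding is_maximal_chain_def is_chain_def by auto
  have Ds: "D \<subseteq> closed_interval \<Gamma> a b" and Dc: "\<forall>x\<in>D. \<forall>y\<in>D. x \<le> y \<or> y \<le> x"
    using D unfolding is_maximal_chain_def is_chain_def by auto
  have below: "x \<le> y" if "x \<in> C" "y \<in> D" for x y
    using that Cs Ds by (auto simp: closed_interval_def intro: order_trans)
  have "C \<union> D \<subseteq> closed_interval \<Gamma> s b"
    using Cs Ds ab bottom_le by (auto simp: closed_interval_def intro: order_trans)
  then have chain: "is_chain (closed_interval \<Gamma> s b) (C \<union> D)"
    using Cc Dc below unfolding is_chain_def by blast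
  have "E \<subseteq> C \<union> D" if E: "is_chain (closed_interval \<Gamma> s b) E" "C \<union> D \<subseteq> E" for E
  proof
    fix e assume e: "e \<in> E"
    have Es: "E \<subseteq> closed_interval \<Gamma> s b" and Ec: "\<forall>x\<in>E. \<forall>y\<in>E. x \<le> y \<or> y \<le> x"
      using E(1) unfolding is_chain_def by auto
    have "e \<le> a \<or> a \<le> e" using Ec e aC E(2) by blast
    then show "e \<in> C \<union> D"
    proof
      assume "e \<le> a"
      then have "is_chain (closed_interval \<Gamma> s a) (insert e C)"
        using Cs Cc Ec Es e E(2) by (auto simp: is_chain_def closed_interval_def)
      then show ?thesis using maximal_chain_insert[OF C] by blast
    next
      assume "a \<le> e"
      then have "is_chain (closed_interval \<Gamma> a b) (insert e D)"
        using Ds Dc Ec Es e E(2) by (auto simp: is_chain_def closed_interval_def)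
      then show ?thesis using maximal_chain_insert[OF D] by blast
    qed
  qed
  then show "is_maximal_chain (closed_interval \<Gamma> s b) (C \<union> D)"
    using chain unfolding is_maximal_chain_def by blast
  show "C \<inter> D = {a}"
    using aC aD Cs Ds by (auto simp: closed_interval_def intro: order.antisym)
qed

lemma card_maximal_chain_interval:
  assumes a: "a \<in> \<Gamma>" and b: "b \<in> \<Gamma>" and ab: "a \<le> b"
    and D: "is_maximal_chain (closed_interval \<Gamma> a b) D"
  shows "card D + rk \<Gamma> s a = Suc (rk \<Gamma> s b)"
proof -
  obtain C where C: "is_maximal_chain (closed_interval \<Gamma> s a) C"
    using maximal_chain_exists[OF finite_closed_interval] by blast
  have "card C + card D = card (C \<union> D) + card (C \<inter> D)"
    by (rule card_Un_Int[OF finite_maximal_chain[OF finite_closed_interval C]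
          finite_maximal_chain[OF finite_closed_interval D]])
  moreover have "card (C \<inter> D) = 1" using maximal_chain_Un(2)[OF a ab C D] by simp
  moreover have "card (C \<union> D) = Suc (rk \<Gamma> s b)"
    using card_maximal_chain[OF b maximal_chain_Un(1)[OF a ab C D]] .
  moreover have "card C = Suc (rk \<Gamma> s a)" using card_maximal_chain[OF a C] .
  ultimately show ?thesis by linarith
qed

lemma rk_bottom: "rk \<Gamma> s s = 0"
proof -
  have "is_maximal_chain (closed_interval \<Gamma> s s) {s}"
    using bottom_mem by (auto simp: is_maximal_chain_def is_chain_def closed_interval_def)
  then have "card {s} = Suc (rk \<Gamma> s s)" by (rule card_maximal_chain[OF bottom_mem])
  then show ?thesis by simp
qed

lemma rk_less_and_long_simplex:
  assumes a: "a \<in> \<Gamma>" and b: "b \<in> \<Gamma>" and ab: "a < b"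
  shows "rk \<Gamma> s a < rk \<Gamma> s b"
    and "simplices (open_interval \<Gamma> a b) (rk \<Gamma> s b - rk \<Gamma> s a - 1) \<noteq> {}"
proof -
  obtain D where D: "is_maximal_chain (closed_interval \<Gamma> a b) D"
    using maximal_chain_exists[OF finite_closed_interval] by blast
  have finD: "finite D" using finite_maximal_chain[OF finite_closed_interval D] .
  have "a \<in> D" "b \<in> D"
    by (rule maximal_chain_mem[OF D], use a b ab in \<open>auto simp: closed_interval_def\<close>)+
  then have "card {a, b} \<le> card D" using finD by (intro card_mono) auto
  then have two: "2 \<le> card D" using ab by simp
  have card: "card D + rk \<Gamma> s a = Suc (rk \<Gamma> s b)"
    using card_maximal_chain_interval[OF a b _ D] ab by simp
  then show "rk \<Gamma> s a < rk \<Gamma> s b" using two by simp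
  have Ds: "D \<subseteq> closed_interval \<Gamma> a b" and Dc: "\<forall>x\<in>D. \<forall>y\<in>D. x \<le> y \<or> y \<le> x"
    using D unfolding is_maximal_chain_def is_chain_def by auto
  obtain xs where xs: "set xs = D - {a, b}" "sorted_wrt (<) xs" "length xs = card (D - {a, b})"
    using sorted_list_of_chain[of "D - {a, b}"] finD Dc by blast
  have "set xs \<subseteq> open_interval \<Gamma> a b"
    using xs(1) Ds by (auto simp: closed_interval_def open_interval_def order_le_less)
  moreover have "length xs = rk \<Gamma> s b - rk \<Gamma> s a - 1"
    using xs(3) \<open>a \<in> D\<close> \<open>b \<in> D\<close> ab card finD by (simp add: card_Diff_subset)
  ultimately show "simplices (open_interval \<Gamma> a b) (rk \<Gamma> s b - rk \<Gamma> s a - 1) \<noteq> {}"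
    using xs(2) by (auto simp: simplices_def)
qed

lemmas rk_less = rk_less_and_long_simplex(1)

lemma length_simplex_open_interval:
  assumes a: "a \<in> \<Gamma>" and b: "b \<in> \<Gamma>" and ab: "a < b"
    and xs: "xs \<in> simplices (open_interval \<Gamma> a b) k"
  shows "k + rk \<Gamma> s a < rk \<Gamma> s b"
proof -
  have xs': "set xs \<subseteq> open_interval \<Gamma> a b" "sorted_wrt (<) xs" "length xs = k"
    using xs by (auto simp: simplices_def)
  then have "sorted_wrt (\<lambda>x y. rk \<Gamma> s x < rk \<Gamma> s y) xs"
    using rk_less by (auto simp: open_interval_def elim!: sorted_wrt_mono_rel[rotated])
  then have "distinct (map (rk \<Gamma> s) xs)"
    by (simp add: sorted_wrt_map sorted_wrt_less_distinct)
  then have "card (rk \<Gamma> s ` set xs) = k"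
    using xs'(3) distinct_card by fastforce
  moreover have "rk \<Gamma> s ` set xs \<subseteq> {rk \<Gamma> s a<..<rk \<Gamma> s b}"
    using xs'(1) a b rk_less by (auto simp: open_interval_def)
  then have "card (rk \<Gamma> s ` set xs) \<le> rk \<Gamma> s b - Suc (rk \<Gamma> s a)"
    using card_mono[of "{rk \<Gamma> s a<..<rk \<Gamma> s b}"] by fastforce
  ultimately show ?thesis using rk_less[OF a b ab] by linarith
qed

lemma order_complex_dim_open_interval:
  assumes "a \<in> \<Gamma>" "b \<in> \<Gamma>" "a < b"
  shows "order_complex_dim (open_interval \<Gamma> a b) = int (rk \<Gamma> s b) - int (rk \<Gamma> s a) - 2"
proof -
  have "order_complex_dim (open_interval \<Gamma> a b) = int (rk \<Gamma> s b - rk \<Gamma> s a - 1) - 1"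
    using rk_less_and_long_simplex(2)[OF assms] length_simplex_open_interval[OF assms(1-3)]
    by (intro order_complex_dim_eq) fastforce+
  then show ?thesis using rk_less[OF assms] by simp
qed

lemma exact_at_open_interval_above_dim:
  assumes "a \<in> \<Gamma>" "b \<in> \<Gamma>" "a < b" "rk \<Gamma> s b \<le> k + rk \<Gamma> s a"
  shows "exact_at TYPE('f::field) (open_interval \<Gamma> a b) k"
proof (rule exact_at_if_no_simplices)
  show "simplices (open_interval \<Gamma> a b) k = {}"
    using length_simplex_open_interval[OF assms(1-3)] assms(4) by fastforce
  show "0 < k" using rk_less[OF assms(1-3)] assms(4) by simp
qed

section \<open>Rank truncations of intervals and the Cohen--Macaulay criterion\<close>

definition interval_rank_ge :: "'a \<Rightarrow> nat \<Rightarrow> 'a set" where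
  "interval_rank_ge c r = {y \<in> \<Gamma>. s < y \<and> y < c \<and> r \<le> rk \<Gamma> s y}"

definition rank_layer :: "'a \<Rightarrow> nat \<Rightarrow> 'a set" where
  "rank_layer c r = {y \<in> interval_rank_ge c r. rk \<Gamma> s y = r}"

lemma interval_rank_ge_1: "interval_rank_ge c 1 = open_interval \<Gamma> s c"
proof -
  have "1 \<le> rk \<Gamma> s y" if "y \<in> \<Gamma>" "s < y" for y
    using rk_less[OF bottom_mem that] rk_bottom by simp
  then show ?thesis by (auto simp: interval_rank_ge_def open_interval_def)
qed

lemma Gamma_bq_eq_interval_rank_ge:
  "int r = int (rk \<Gamma> s b) - q + 1 \<Longrightarrow> Gamma_bq \<Gamma> s b q = interval_rank_ge b r"
  by (auto simp: Gamma_bq_def interval_rank_ge_def)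

lemma minimal_subset_rank_layer: "minimal_subset (interval_rank_ge c r) (rank_layer c r)"
proof
  show "rank_layer c r \<subseteq> interval_rank_ge c r" by (auto simp: rank_layer_def)
  fix x y
  assume x: "x \<in> rank_layer c r" and y: "y \<in> interval_rank_ge c r"
  show "\<not> y < x"
  proof
    assume "y < x"
    then have "rk \<Gamma> s y < rk \<Gamma> s x"
      using x y by (intro rk_less) (auto simp: rank_layer_def interval_rank_ge_def)
    then show False using x y by (simp add: rank_layer_def interval_rank_ge_def)
  qed
qed

lemma interval_rank_ge_diff_rank_layer:
  "interval_rank_ge c r - rank_layer c r = interval_rank_ge c (Suc r)"
  by (auto simp: rank_layer_def interval_rank_ge_def)

lemma strict_upset_rank_layer:
  assumes "x \<in> rank_layer c r"
  shows "strict_upset (interval_rank_ge c r) x = open_interval \<Gamma> x c"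
proof -
  have x: "x \<in> \<Gamma>" "s < x" "rk \<Gamma> s x = r"
    using assms by (auto simp: rank_layer_def interval_rank_ge_def)
  have "s < y \<and> r \<le> rk \<Gamma> s y" if "y \<in> \<Gamma>" "x < y" for y
    using rk_less[OF x(1) that] x order.strict_trans[OF x(2) that(2)] by simp
  then show ?thesis
    by (auto simp: strict_upset_def interval_rank_ge_def open_interval_def)
qed

lemma cohen_macaulay_iff_exact_at:
  "cohen_macaulay TYPE('f::field) \<Gamma> \<longleftrightarrow>
    (\<forall>a\<in>\<Gamma>. \<forall>b\<in>\<Gamma>. \<forall>k. a < b \<longrightarrow> k + rk \<Gamma> s a + 1 < rk \<Gamma> s b \<longrightarrow>
       exact_at TYPE('f) (open_interval \<Gamma> a b) k)"
proof (intro iffI ballI allI impI)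
  fix a b k
  assume cm: "cohen_macaulay TYPE('f) \<Gamma>" and ab: "a \<in> \<Gamma>" "b \<in> \<Gamma>" "a < b"
    and k: "k + rk \<Gamma> s a + 1 < rk \<Gamma> s b"
  have "int k - 1 \<noteq> order_complex_dim (open_interval \<Gamma> a b)"
    using k order_complex_dim_open_interval[OF ab] by simp
  then have "reduced_cohomology_vanishes TYPE('f) (open_interval \<Gamma> a b) (int k - 1)"
    using cm ab unfolding cohen_macaulay_def by blast
  then show "exact_at TYPE('f) (open_interval \<Gamma> a b) k"
    by (simp add: reduced_cohomology_vanishes_iff_exact_at)
next
  assume exact: "\<forall>a\<in>\<Gamma>. \<forall>b\<in>\<Gamma>. \<forall>k. a < b \<longrightarrow> k + rk \<Gamma> s a + 1 < rk \<Gamma> s b \<longrightarrow>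
       exact_at TYPE('f) (open_interval \<Gamma> a b) k"
  show "cohen_macaulay TYPE('f) \<Gamma>"
    unfolding cohen_macaulay_def
  proof (intro ballI allI impI)
    fix a b n
    assume ab: "a \<in> \<Gamma>" "b \<in> \<Gamma>" "a < b"
      and nonvanishing: "\<not> reduced_cohomology_vanishes TYPE('f) (open_interval \<Gamma> a b) n"
    define k where "k = nat (n + 1)"
    have n: "n = int k - 1" and not_exact: "\<not> exact_at TYPE('f) (open_interval \<Gamma> a b) k"
      using nonvanishing by (auto simp: reduced_cohomology_vanishes_iff_exact_at k_def)
    have "\<not> k + rk \<Gamma> s a + 1 < rk \<Gamma> s b" using exact ab not_exact by blast
    moreover have "\<not> rk \<Gamma> s b \<le> k + rk \<Gamma> s a"
      using exact_at_open_interval_above_dim[OF ab, where 'f = 'f] not_exact by blast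
    ultimately have "k + rk \<Gamma> s a + 1 = rk \<Gamma> s b" by linarith
    then show "n = order_complex_dim (open_interval \<Gamma> a b)"
      using n order_complex_dim_open_interval[OF ab] by simp
  qed
qed

lemma Gamma_bq_vanishing_iff_exact_at:
  "(\<forall>q n :: int. n < q \<and> q \<le> int (rk \<Gamma> s b) \<longrightarrow>
      reduced_cohomology_vanishes TYPE('f::field) (Gamma_bq \<Gamma> s b q) (n - 2)) \<longleftrightarrow>
   (\<forall>r k. 0 < r \<longrightarrow> k + r < rk \<Gamma> s b \<longrightarrow> exact_at TYPE('f) (interval_rank_ge b r) k)"
proof (intro iffI allI impI)
  fix r k :: nat
  assume vanishing: "\<forall>q n :: int. n < q \<and> q \<le> int (rk \<Gamma> s b) \<longrightarrow>
      reduced_cohomology_vanishes TYPE('f) (Gamma_bq \<Gamma> s b q) (n - 2)"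
    and "0 < r" "k + r < rk \<Gamma> s b"
  then have "reduced_cohomology_vanishes TYPE('f) (Gamma_bq \<Gamma> s b (int (rk \<Gamma> s b) - int r + 1))
      (int k + 1 - 2)"
    using vanishing[rule_format, of "int k + 1" "int (rk \<Gamma> s b) - int r + 1"] by linarith
  then show "exact_at TYPE('f) (interval_rank_ge b r) k"
    by (simp add: Gamma_bq_eq_interval_rank_ge reduced_cohomology_vanishes_iff_exact_at)
next
  fix q n :: int
  assume exact: "\<forall>r k. 0 < r \<longrightarrow> k + r < rk \<Gamma> s b \<longrightarrow> exact_at TYPE('f) (interval_rank_ge b r) k"
    and qn: "n < q \<and> q \<le> int (rk \<Gamma> s b)"
  show "reduced_cohomology_vanishes TYPE('f) (Gamma_bq \<Gamma> s b q) (n - 2)"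
  proof (cases "n - 2 < -1")
    case False
    define r where "r = nat (int (rk \<Gamma> s b) - q + 1)"
    have "int r = int (rk \<Gamma> s b) - q + 1" "0 < r" "nat (n - 1) + r < rk \<Gamma> s b"
      using qn False by (auto simp: r_def)
    then show ?thesis
      using exact by (simp add: Gamma_bq_eq_interval_rank_ge reduced_cohomology_vanishes_iff_exact_at)
  qed (simp add: reduced_cohomology_vanishes_iff_exact_at)
qed

lemma exact_at_interval_rank_ge:
  assumes exact: "\<forall>a\<in>\<Gamma>. \<forall>b\<in>\<Gamma>. \<forall>k. a < b \<longrightarrow> k + rk \<Gamma> s a + 1 < rk \<Gamma> s b \<longrightarrow>
       exact_at TYPE('f::field) (open_interval \<Gamma> a b) k"
    and c: "c \<in> \<Gamma>" and "0 < r" "k + r < rk \<Gamma> s c"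
  shows "exact_at TYPE('f) (interval_rank_ge c r) k"
  using \<open>0 < r\<close> \<open>k + r < rk \<Gamma> s c\<close>
proof (induction r rule: nat_induct_non_zero)
  case 1
  then have "c \<noteq> s" using rk_bottom by auto
  then have "s < c" using bottom_le[OF c] by (simp add: order.strict_iff_order)
  then have "exact_at TYPE('f) (open_interval \<Gamma> s c) k"
    using exact bottom_mem c 1 by (simp add: rk_bottom)
  then show ?case by (simp only: interval_rank_ge_1)
next
  case (Suc r)
  interpret minimal_subset "interval_rank_ge c r" "rank_layer c r"
    by (rule minimal_subset_rank_layer)
  have "exact_at TYPE('f) (interval_rank_ge c r - rank_layer c r) k"
  proof (rule exact_at_diff)
    show "exact_at TYPE('f) (interval_rank_ge c r) k" using Suc by simp
    fix x
    assume x: "x \<in> rank_layer c r"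
    then have "x \<in> \<Gamma>" "x < c" "k + rk \<Gamma> s x + 1 < rk \<Gamma> s c"
      using Suc.prems by (auto simp: rank_layer_def interval_rank_ge_def)
    then show "exact_at TYPE('f) (strict_upset (interval_rank_ge c r) x) k"
      using exact c by (simp add: strict_upset_rank_layer[OF x])
  qed
  then show ?case by (simp add: interval_rank_ge_diff_rank_layer)
qed

lemma exact_at_open_interval:
  assumes exact: "\<forall>r k. 0 < r \<longrightarrow> k + r < rk \<Gamma> s b \<longrightarrow>
      exact_at TYPE('f::field) (interval_rank_ge b r) k"
    and a: "a \<in> \<Gamma>" and ab: "a < b" and k: "k + rk \<Gamma> s a + 1 < rk \<Gamma> s b"
  shows "exact_at TYPE('f) (open_interval \<Gamma> a b) k"
proof (cases "a = s")
  case True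
  then have "exact_at TYPE('f) (interval_rank_ge b 1) k"
    using exact k by (simp add: rk_bottom)
  then show ?thesis using True by (simp only: interval_rank_ge_1)
next
  case False
  define r where "r = rk \<Gamma> s a"
  have "s < a" using False bottom_le[OF a] by (simp add: order.strict_iff_order)
  then have "0 < r" using rk_less[OF bottom_mem a] by (simp add: r_def rk_bottom)
  have a_layer: "a \<in> rank_layer b r"
    using a ab \<open>s < a\<close> by (simp add: r_def rank_layer_def interval_rank_ge_def)
  interpret minimal_subset "interval_rank_ge b r" "rank_layer b r"
    by (rule minimal_subset_rank_layer)
  have "exact_at TYPE('f) (strict_upset (interval_rank_ge b r) a) k"
  proof (rule exact_at_strict_upset[OF _ _ a_layer])
    show "exact_at TYPE('f) (interval_rank_ge b r - rank_layer b r) k"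
      using exact k by (simp add: interval_rank_ge_diff_rank_layer r_def)
    show "exact_at TYPE('f) (interval_rank_ge b r) (Suc k)"
      using exact k \<open>0 < r\<close> by (simp add: r_def)
  qed
  then show ?thesis by (simp add: strict_upset_rank_layer[OF a_layer])
qed

end

theorem proposition4p2:
  fixes \<Gamma> :: "'a::order set" and s :: 'a
  assumes "finite_ranked_poset \<Gamma> s"
  shows "cohen_macaulay TYPE('f::field) \<Gamma> \<longleftrightarrow>
    (\<forall>b \<in> \<Gamma> - {s}. \<forall>q n :: int. n < q \<and> q \<le> int (rk \<Gamma> s b) \<longrightarrow>
        reduced_cohomology_vanishes TYPE('f) (Gamma_bq \<Gamma> s b q) (n - 2))"
proof -
  interpret ranked_poset \<Gamma> s using assms by unfold_locales
  show ?thesis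
    unfolding cohen_macaulay_iff_exact_at Gamma_bq_vanishing_iff_exact_at
  proof (intro iffI ballI allI impI)
    fix b r k
    assume "\<forall>a\<in>\<Gamma>. \<forall>b\<in>\<Gamma>. \<forall>k. a < b \<longrightarrow> k + rk \<Gamma> s a + 1 < rk \<Gamma> s b \<longrightarrow>
        exact_at TYPE('f) (open_interval \<Gamma> a b) k"
      and "b \<in> \<Gamma> - {s}" "0 < r" "k + r < rk \<Gamma> s b"
    then show "exact_at TYPE('f) (interval_rank_ge b r) k"
      by (intro exact_at_interval_rank_ge) auto
  next
    fix a b k
    assume "\<forall>b\<in>\<Gamma> - {s}. \<forall>r k. 0 < r \<longrightarrow> k + r < rk \<Gamma> s b \<longrightarrow>
        exact_at TYPE('f) (interval_rank_ge b r) k"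
      and ab: "a \<in> \<Gamma>" "b \<in> \<Gamma>" "a < b" and "k + rk \<Gamma> s a + 1 < rk \<Gamma> s b"
    moreover have "b \<noteq> s" using bottom_le[OF ab(1)] ab(3) by auto
    ultimately show "exact_at TYPE('f) (open_interval \<Gamma> a b) k"
      by (intro exact_at_open_interval) auto
  qed
qed

end
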